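(* Let $S$ be a finite set of anchored rectangles in the plane, where the $x$-coordinates of the top-right vertices are pairwise distinct (and likewise their $y$-coordinates). Store $S$ in a leaf-oriented red-black tree $\mathcal{T}$ keyed by $r_x$, and color each $r\in S$ by $\mathit{col}(r):=\max_{v\in N(r)}\mathrm{height}(v)$, where $N(r)$ consists of the leaf storing $r$ together with all internal nodes $v$ with $r_{\max}(\mathit{right}(v))=r$. Then this coloring is conflict-free with respect to points: for every point $q\in\mathbb{R}^2$ contained in at least one rectangle of $S$, some rectangle of $S$ containing $q$ has a color that no other rectangle of $S$ containing $q$ has.
   Context: A rectangle is anchored if its bottom-left vertex is the origin; for such a rectangle $r$, $(r_x,r_y)$ denotes its top-right vertex. A leaf-oriented red-black tree stores the keys in its leaves (one rectangle per leaf, ordered by $r_x$), and each internal node stores a splitting value strictly between consecutive keys, with keys smaller than it in the left subtree and larger in the right subtree. For a node $v$, $\mathit{left}(v)$, $\mathit{right}(v)$ denote its children, $S(v)$ is the set of rectangles stored in leaves of the subtree rooted at $v$, $r_{\max}(v)$ is the rectangle $r\in S(v)$ maximizing $r_y$, and $\mathrm{height}(v)$ is the height of the subtree rooted at $v$ (0 for a leaf). *)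

theory Defs
  imports Complex_Main
begin

text \<open>An anchored rectangle is identified with its top-right vertex (r_x, r_y);
  its bottom-left vertex is the origin.  It is the closed set [0,r_x] x [0,r_y].\<close>
type_synonym rect = "real \<times> real"

definition anchored :: "rect \<Rightarrow> bool" where
  "anchored r \<longleftrightarrow> fst r > 0 \<and> snd r > 0"

definition contains :: "rect \<Rightarrow> real \<times> real \<Rightarrow> bool" where
  "contains r q \<longleftrightarrow> 0 \<le> fst q \<and> fst q \<le> fst r \<and> 0 \<le> snd q \<and> snd q \<le> snd r"

datatype color = Red | Black

datatype tree = Leaf rect | Node color tree real tree

fun leaves :: "tree \<Rightarrow> rect list" where
  "leaves (Leaf r) = [r]"
| "leaves (Node c l s rt) = leaves l @ leaves rt"

fun height :: "tree \<Rightarrow> nat" where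
  "height (Leaf r) = 0"
| "height (Node c l s rt) = Suc (max (height l) (height rt))"

fun subtrees :: "tree \<Rightarrow> tree set" where
  "subtrees (Leaf r) = {Leaf r}"
| "subtrees (Node c l s rt) = insert (Node c l s rt) (subtrees l \<union> subtrees rt)"

fun is_node :: "tree \<Rightarrow> bool" where
  "is_node (Leaf r) = False"
| "is_node (Node c l s rt) = True"

fun right :: "tree \<Rightarrow> tree" where
  "right (Node c l s rt) = rt"
| "right (Leaf r) = Leaf r"

fun search_tree :: "tree \<Rightarrow> bool" where
  "search_tree (Leaf r) = True"
| "search_tree (Node c l s rt) \<longleftrightarrow>
     (\<forall>r\<in>set (leaves l). fst r < s) \<and> (\<forall>r\<in>set (leaves rt). s < fst r) \<and>
     search_tree l \<and> search_tree rt"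

fun col_of :: "tree \<Rightarrow> color" where
  "col_of (Leaf r) = Black"
| "col_of (Node c l s rt) = c"

fun bheight :: "tree \<Rightarrow> nat" where
  "bheight (Leaf r) = 1"
| "bheight (Node c l s rt) = (if c = Black then Suc (bheight l) else bheight l)"

fun red_black :: "tree \<Rightarrow> bool" where
  "red_black (Leaf r) = True"
| "red_black (Node c l s rt) \<longleftrightarrow>
     red_black l \<and> red_black rt \<and> bheight l = bheight rt \<and>
     (c = Red \<longrightarrow> col_of l = Black \<and> col_of rt = Black)"

definition rmax :: "tree \<Rightarrow> rect" where
  "rmax v = (ARG_MAX snd r. r \<in> set (leaves v))"

text \<open>col(r) = max height over N(r): the leaf storing r (height 0) and all internal
  nodes v with r_max(right v) = r.\<close>
definition colr :: "tree \<Rightarrow> rect \<Rightarrow> nat" where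
  "colr T r = Max (insert 0 (height ` {v \<in> subtrees T. is_node v \<and> rmax (right v) = r}))"

end

theory Submission
  imports Defs
begin

text \<open>Among the rectangles containing q, take one of maximal colour c; suppose another one
  has colour c too.  Both are witnessed by nodes of height c, in N(r1) and N(r2), and two
  distinct nodes of equal height have a lowest common ancestor w that separates them, say
  with the witness of r1 (the one with smaller x-coordinate) on the left.  Then
  r3 = r_max(right w) lies to the right of r1 and above r2, so it also contains q, while
  w \<in> N(r3) gives r3 a colour of at least height w > c.
  Only the search-tree order and distinct x-coordinates are needed; the red-black invariant
  bounds the number of colours, which the statement does not mention.\<close>

lemma leaves_nonempty: "leaves t \<noteq> []"
  by (induction t) auto

lemma rmax_in_leaves: "rmax v \<in> set (leaves v)"
  and snd_le_snd_rmax: "r \<in> set (leaves v) \<Longrightarrow> snd r \<le> snd (rmax v)"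
proof -
  let ?A = "set (leaves v)"
  have fin: "finite (snd ` ?A)" and ne: "snd ` ?A \<noteq> {}"
    using leaves_nonempty by auto
  obtain x where x: "x \<in> ?A" "snd x = Max (snd ` ?A)"
    using Max_in[OF fin ne] by auto
  have x_max: "\<And>y. y \<in> ?A \<Longrightarrow> \<not> snd y > snd x"
    using x(2) fin by (simp add: not_less)
  show "rmax v \<in> ?A"
    unfolding rmax_def by (rule arg_maxI[of "\<lambda>r. r \<in> ?A" x snd, OF x(1) x_max])
  show "snd r \<le> snd (rmax v)" if r: "r \<in> ?A"
    unfolding rmax_def
  proof (rule arg_maxI[of "\<lambda>r. r \<in> ?A" x snd, OF x(1) x_max])
    fix y
    assume "\<forall>z. z \<in> ?A \<longrightarrow> \<not> snd y < snd z"
    then show "snd r \<le> snd y"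
      using r not_less by blast
  qed
qed

lemma finite_subtrees: "finite (subtrees t)"
  by (induction t) auto

lemma self_in_subtrees: "t \<in> subtrees t"
  by (cases t) auto

lemma Leaf_in_subtrees: "r \<in> set (leaves t) \<Longrightarrow> Leaf r \<in> subtrees t"
  by (induction t) auto

lemma set_leaves_subtree: "v \<in> subtrees t \<Longrightarrow> set (leaves v) \<subseteq> set (leaves t)"
  by (induction t) auto

lemma height_subtree_le: "v \<in> subtrees t \<Longrightarrow> height v \<le> height t"
  by (induction t) auto

lemma search_tree_subtree: "search_tree t \<Longrightarrow> v \<in> subtrees t \<Longrightarrow> search_tree v"
  by (induction t) auto

lemma set_leaves_right: "set (leaves (right v)) \<subseteq> set (leaves v)"
  by (cases v) auto

lemma separating_ancestor:
  assumes "v1 \<in> subtrees t" "v2 \<in> subtrees t" "v1 \<noteq> v2" "height v1 = height v2"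
  shows "\<exists>c l s rt. Node c l s rt \<in> subtrees t \<and>
           (v1 \<in> subtrees l \<and> v2 \<in> subtrees rt \<or> v2 \<in> subtrees l \<and> v1 \<in> subtrees rt)"
  using assms
proof (induction t)
  case (Leaf r)
  then show ?case by simp
next
  case (Node c l s rt)
  let ?t = "Node c l s rt"
  have lower: "height v < height ?t" if "v \<in> subtrees l \<union> subtrees rt" for v
    using that height_subtree_le[of v l] height_subtree_le[of v rt] by auto
  have "v1 \<noteq> ?t" "v2 \<noteq> ?t"
    using Node.prems lower by fastforce+
  then have "v1 \<in> subtrees l \<union> subtrees rt" "v2 \<in> subtrees l \<union> subtrees rt"
    using Node.prems by auto
  then consider "v1 \<in> subtrees l" "v2 \<in> subtrees l" | "v1 \<in> subtrees rt" "v2 \<in> subtrees rt"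
    | "v1 \<in> subtrees l \<and> v2 \<in> subtrees rt \<or> v2 \<in> subtrees l \<and> v1 \<in> subtrees rt"
    by blast
  then show ?case
  proof cases
    case 1
    then show ?thesis using Node.IH(1) Node.prems by fastforce
  next
    case 2
    then show ?thesis using Node.IH(2) Node.prems by fastforce
  next
    case 3
    then show ?thesis by auto
  qed
qed

lemma search_tree_left_of_right:
  assumes "search_tree t" "Node c l s rt \<in> subtrees t"
    "a \<in> set (leaves v1)" "v1 \<in> subtrees l" "b \<in> set (leaves v2)" "v2 \<in> subtrees rt"
  shows "fst a < fst b"
proof -
  have "search_tree (Node c l s rt)"
    using assms(1,2) by (rule search_tree_subtree)
  moreover have "a \<in> set (leaves l)" "b \<in> set (leaves rt)"
    using assms(3-6) set_leaves_subtree by auto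
  ultimately show ?thesis by fastforce
qed

definition colour_nodes :: "tree \<Rightarrow> rect \<Rightarrow> tree set" where
  "colour_nodes T r = {v \<in> subtrees T. v = Leaf r \<or> is_node v \<and> rmax (right v) = r}"

lemma colour_nodes_disjoint:
  "v \<in> colour_nodes T r \<Longrightarrow> v \<in> colour_nodes T r' \<Longrightarrow> r = r'"
  unfolding colour_nodes_def by (cases v) auto

lemma in_leaves_colour_node: "v \<in> colour_nodes T r \<Longrightarrow> r \<in> set (leaves v)"
  unfolding colour_nodes_def using rmax_in_leaves set_leaves_right by fastforce

lemma colr_eq_Max_colour_nodes:
  assumes "r \<in> set (leaves T)"
  shows "colr T r = Max (height ` colour_nodes T r)"
proof -
  have "colour_nodes T r =
          insert (Leaf r) {v \<in> subtrees T. is_node v \<and> rmax (right v) = r}"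
    unfolding colour_nodes_def using Leaf_in_subtrees[OF assms] by auto
  then show ?thesis
    unfolding colr_def by simp
qed

lemma colr_attained:
  assumes "r \<in> set (leaves T)"
  obtains v where "v \<in> colour_nodes T r" "height v = colr T r"
proof -
  have "finite (colour_nodes T r)" "colour_nodes T r \<noteq> {}"
    unfolding colour_nodes_def using finite_subtrees Leaf_in_subtrees[OF assms] by auto
  then have "colr T r \<in> height ` colour_nodes T r"
    unfolding colr_eq_Max_colour_nodes[OF assms] by (intro Max_in) auto
  then show ?thesis using that by (metis imageE)
qed

lemma height_le_colr_rmax_right:
  assumes "w \<in> subtrees T" "is_node w"
  shows "height w \<le> colr T (rmax (right w))"
  unfolding colr_def using assms finite_subtrees by (intro Max_ge) auto

lemma equal_colr_dominated:
  assumes "search_tree T" "r1 \<in> set (leaves T)" "r2 \<in> set (leaves T)" "r1 \<noteq> r2"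
    and "colr T r1 = colr T r2" "fst r1 < fst r2"
  shows "\<exists>r3\<in>set (leaves T). fst r1 < fst r3 \<and> snd r2 \<le> snd r3 \<and> colr T r1 < colr T r3"
proof -
  obtain v1 where v1: "v1 \<in> colour_nodes T r1" "height v1 = colr T r1"
    using colr_attained[OF assms(2)] .
  obtain v2 where v2: "v2 \<in> colour_nodes T r2" "height v2 = colr T r2"
    using colr_attained[OF assms(3)] .
  have sub: "v1 \<in> subtrees T" "v2 \<in> subtrees T"
    using v1(1) v2(1) unfolding colour_nodes_def by auto
  have in_v: "r1 \<in> set (leaves v1)" "r2 \<in> set (leaves v2)"
    using v1(1) v2(1) by (auto intro: in_leaves_colour_node)
  have "v1 \<noteq> v2"
    using v1(1) v2(1) assms(4) colour_nodes_disjoint by blast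
  then obtain c l s rt where w: "Node c l s rt \<in> subtrees T"
    and split: "v1 \<in> subtrees l \<and> v2 \<in> subtrees rt \<or> v2 \<in> subtrees l \<and> v1 \<in> subtrees rt"
    using separating_ancestor[OF sub] v1(2) v2(2) assms(5) by metis
  have v1l: "v1 \<in> subtrees l" and v2r: "v2 \<in> subtrees rt"
    using split search_tree_left_of_right[OF assms(1) w in_v(2) _ in_v(1)] assms(6) by auto
  define r3 where "r3 = rmax rt"
  have "r3 \<in> set (leaves T)"
    using rmax_in_leaves[of rt] set_leaves_subtree[OF w] unfolding r3_def by auto
  moreover have "fst r1 < fst r3"
    using search_tree_left_of_right[OF assms(1) w in_v(1) v1l rmax_in_leaves self_in_subtrees]
    unfolding r3_def by simp
  moreover have "snd r2 \<le> snd r3"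
    using snd_le_snd_rmax set_leaves_subtree[OF v2r] in_v(2) unfolding r3_def by blast
  moreover have "colr T r1 < colr T r3"
  proof -
    have "height v1 < height (Node c l s rt)"
      using height_subtree_le[OF v1l] by simp
    also have "\<dots> \<le> colr T r3"
      using height_le_colr_rmax_right[OF w] unfolding r3_def by simp
    finally show ?thesis using v1(2) by simp
  qed
  ultimately show ?thesis by blast
qed

lemma contains_dominating:
  "contains r1 q \<Longrightarrow> contains r2 q \<Longrightarrow> fst r1 < fst r3 \<Longrightarrow> snd r2 \<le> snd r3 \<Longrightarrow> contains r3 q"
  unfolding contains_def by auto

lemma max_colr_unique:
  assumes "search_tree T" "inj_on fst (set (leaves T))"
    and "r \<in> set (leaves T)" "contains r q"
    and max: "\<And>x. x \<in> set (leaves T) \<Longrightarrow> contains x q \<Longrightarrow> colr T x \<le> colr T r"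
    and "r' \<in> set (leaves T)" "contains r' q" "r' \<noteq> r"
  shows "colr T r' \<noteq> colr T r"
proof
  assume same: "colr T r' = colr T r"
  have no_tie: False
    if tie: "r1 \<in> set (leaves T)" "r2 \<in> set (leaves T)" "r1 \<noteq> r2" "contains r1 q" "contains r2 q"
       "colr T r1 = colr T r2" "fst r1 < fst r2" "colr T r1 = colr T r" for r1 r2
  proof -
    obtain r3 where "r3 \<in> set (leaves T)" "fst r1 < fst r3" "snd r2 \<le> snd r3"
      and "colr T r1 < colr T r3"
      using equal_colr_dominated[OF assms(1) tie(1-3,6,7)] by blast
    moreover have "contains r3 q"
      using contains_dominating[OF tie(4,5)] calculation(2,3) .
    ultimately have "colr T r3 \<le> colr T r"
      using max by blast
    then show False
      using \<open>colr T r1 < colr T r3\<close> tie(8) by simp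
  qed
  have "fst r' \<noteq> fst r"
    using assms(2,3,6,8) unfolding inj_on_def by blast
  then show False
    using no_tie[of r' r] no_tie[of r r'] assms(3,4,6-8) same by (cases "fst r' < fst r") auto
qed

theorem mainTheorem1:
  fixes S :: "rect set" and T :: tree
  assumes "finite S"
    and "\<forall>r\<in>S. anchored r"
    and "inj_on fst S" and "inj_on snd S"
    and "set (leaves T) = S" and "distinct (leaves T)"
    and "search_tree T" and "red_black T"
  shows "\<forall>q :: real \<times> real. (\<exists>r\<in>S. contains r q) \<longrightarrow>
           (\<exists>r\<in>S. contains r q \<and>
              (\<forall>r'\<in>S. r' \<noteq> r \<and> contains r' q \<longrightarrow> colr T r' \<noteq> colr T r))"
proof (intro allI impI)
  fix q :: "real \<times> real"
  assume "\<exists>r\<in>S. contains r q"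
  define Sq where "Sq = {r \<in> S. contains r q}"
  have "finite (colr T ` Sq)" "colr T ` Sq \<noteq> {}"
    using assms(1) \<open>\<exists>r\<in>S. contains r q\<close> unfolding Sq_def by auto
  then obtain r where r: "r \<in> Sq" "colr T r = Max (colr T ` Sq)"
    using Max_in[of "colr T ` Sq"] by (metis imageE)
  have r_max: "colr T x \<le> colr T r" if "x \<in> S" "contains x q" for x
    using r(2) \<open>finite (colr T ` Sq)\<close> that unfolding Sq_def by simp
  show "\<exists>r\<in>S. contains r q \<and>
               (\<forall>r'\<in>S. r' \<noteq> r \<and> contains r' q \<longrightarrow> colr T r' \<noteq> colr T r)"
  proof (intro bexI conjI ballI impI)
    show "r \<in> S" "contains r q"
      using r(1) unfolding Sq_def by auto
    fix r' assume "r' \<in> S" "r' \<noteq> r \<and> contains r' q"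
    then show "colr T r' \<noteq> colr T r"
      using max_colr_unique[OF assms(7), of r q r'] assms(3,5) \<open>r \<in> S\<close> \<open>contains r q\<close> r_max
      by simp
  qed
qed

end
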